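(* For $t\geq 2$, let $F_{2,t}(k)=1$ if $2\leq k\leq t+1$ and $F_{2,t}(k)=0$ otherwise. For $s\geq 3$ and $t\geq 2$, define $F_{s,t}(k)$ recursively by \[F_{s,t}(k)=\begin{cases} \displaystyle\sum_{i=s-1}^{k-1}F_{s-1,t}(i)\sum_{j=\max\{0,\,k-(s-2)t-2\}}^{t-1}\binom{k-i-1}{j}, & \text{if } s\leq k\leq(s-1)t+1; \\ 0, & \text{otherwise.} \end{cases}\] Then for all $s\ge2$ and $t\ge 2$, \[A_{321}(K_{s,t}^\beta)=\sum_{k=s}^{(s-1)t+1}\binom{st-k}{t-1}F_{s,t}(k).\]
   Context: The comb $K_{s,t}$ has elements $e_{i,j}$, $1\le i\le s$, $1\le j\le t$, with partial order generated by the covers $e_{i,1}\lessdot e_{i+1,1}$ ($1\le i\le s-1$) and $e_{i,j}\lessdot e_{i,j+1}$ ($1\le j\le t-1$). $K^\beta_{s,t}$ is the labeled poset on $[st]$ obtained by giving $e_{i,j}$ the label $(i-1)t+j$. A linear extension is a permutation of $[st]$ in which $x$ precedes $y$ whenever $x<y$ in the poset; $A_{321}(P)$ is the number of linear extensions of $P$ avoiding the pattern $321$. *)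

theory Defs
  imports Main
begin

definition comb_elems :: "nat \<Rightarrow> nat \<Rightarrow> (nat \<times> nat) set" where
  "comb_elems s t = {(i, j). 1 \<le> i \<and> i \<le> s \<and> 1 \<le> j \<and> j \<le> t}"

definition comb_cover :: "nat \<Rightarrow> nat \<Rightarrow> nat \<times> nat \<Rightarrow> nat \<times> nat \<Rightarrow> bool" where
  "comb_cover s t x y \<longleftrightarrow>
     x \<in> comb_elems s t \<and> y \<in> comb_elems s t \<and>
     ((snd x = 1 \<and> snd y = 1 \<and> fst y = fst x + 1) \<or>
      (fst y = fst x \<and> snd y = snd x + 1))"

definition comb_less :: "nat \<Rightarrow> nat \<Rightarrow> nat \<times> nat \<Rightarrow> nat \<times> nat \<Rightarrow> bool" where
  "comb_less s t = tranclp (comb_cover s t)"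

definition comb_label :: "nat \<Rightarrow> nat \<times> nat \<Rightarrow> nat" where
  "comb_label t e = (fst e - 1) * t + snd e"

definition combB_less :: "nat \<Rightarrow> nat \<Rightarrow> nat \<Rightarrow> nat \<Rightarrow> bool" where
  "combB_less s t x y \<longleftrightarrow>
     (\<exists>a b. comb_less s t a b \<and> comb_label t a = x \<and> comb_label t b = y)"

definition lin_ext_combB :: "nat \<Rightarrow> nat \<Rightarrow> nat list set" where
  "lin_ext_combB s t = {\<sigma>. distinct \<sigma> \<and> set \<sigma> = {1..s * t} \<and>
     (\<forall>p q. p < length \<sigma> \<and> q < length \<sigma> \<and> combB_less s t (\<sigma> ! p) (\<sigma> ! q) \<longrightarrow> p < q)}"

definition avoids_321 :: "nat list \<Rightarrow> bool" where
  "avoids_321 \<sigma> \<longleftrightarrow>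
     \<not> (\<exists>a b c. a < b \<and> b < c \<and> c < length \<sigma> \<and> \<sigma> ! a > \<sigma> ! b \<and> \<sigma> ! b > \<sigma> ! c)"

definition A321_combB :: "nat \<Rightarrow> nat \<Rightarrow> nat" where
  "A321_combB s t = card {\<sigma> \<in> lin_ext_combB s t. avoids_321 \<sigma>}"

text \<open>F_{s,t}(k); only meaningful for s >= 2 (values for s < 2 are set to 0).
  In the inner sum, the nat subtraction k - (s-2)t - 2 truncates at 0, which is
  exactly max{0, k-(s-2)t-2}.\<close>

fun F :: "nat \<Rightarrow> nat \<Rightarrow> nat \<Rightarrow> nat" where
  "F 0 t k = 0"
| "F (Suc 0) t k = 0"
| "F (Suc (Suc 0)) t k = (if 2 \<le> k \<and> k \<le> t + 1 then 1 else 0)"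
| "F (Suc (Suc (Suc n))) t k =
     (let s = n + 3 in
      if s \<le> k \<and> k \<le> (s - 1) * t + 1 then
        (\<Sum>i = s - 1..k - 1. F (Suc (Suc n)) t i *
           (\<Sum>j = nat (max 0 (int k - int ((s - 2) * t) - 2))..t - 1. (k - i - 1) choose j))
      else 0)"

end

theory Submission
  imports Defs
begin

text \<open>Let \<open>N = (s - 1) t\<close>. The last tooth carries the labels \<open>N + 1 < \<dots> < s t\<close>, and
  its root \<open>N + 1\<close> lies above all spine labels. So in a linear extension \<open>\<sigma>\<close> the last
  tooth appears in increasing order and only labels \<open>\<le> N\<close> precede \<open>N + 1\<close>. Deleting
  the last tooth leaves a linear extension \<open>\<tau>\<close> of the comb with \<open>s - 1\<close> teeth, and \<open>\<sigma>\<close>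
  is recovered from \<open>\<tau>\<close>, the position \<open>p\<close> of \<open>N + 1\<close> and a Boolean mask marking the
  later positions of \<open>N + 2, \<dots>, s t\<close>. Now \<open>\<sigma>\<close> avoids 321 iff \<open>\<tau>\<close> does and the
  labels \<open>\<le> N\<close> after \<open>N + 1\<close> increase; also the root \<open>(s - 2) t + 1\<close> of the previous
  tooth must lie among the first \<open>p\<close> entries of \<open>\<tau>\<close>. Hence it pays to count, for every
  \<open>m\<close>, the avoiding extensions whose last root is among the first \<open>m\<close> entries and which
  increase after position \<open>m\<close>: peeling off the last tooth, the masks compatible with
  \<open>m\<close> contribute binomial sums, and these counts obey the recursion defining \<open>F\<close>. The
  theorem is the case \<open>m = s t\<close>.\<close>

section \<open>The order of the labelled comb\<close>

definition comb_below :: "nat \<Rightarrow> nat \<Rightarrow> nat \<times> nat \<Rightarrow> nat \<times> nat \<Rightarrow> bool" where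
  "comb_below s t a b \<longleftrightarrow> a \<in> comb_elems s t \<and> b \<in> comb_elems s t \<and>
     ((fst a = fst b \<and> snd a < snd b) \<or> (snd a = 1 \<and> fst a < fst b))"

lemma comb_less_imp_comb_below: "comb_less s t a b \<Longrightarrow> comb_below s t a b"
  unfolding comb_less_def
  by (induction rule: tranclp_induct) (auto simp: comb_cover_def comb_below_def comb_elems_def)

lemma comb_less_in_tooth:
  assumes "(i, j) \<in> comb_elems s t" "(i, j') \<in> comb_elems s t" "j < j'"
  shows "comb_less s t (i, j) (i, j')"
  using assms
proof (induction j')
  case (Suc j')
  show ?case
  proof (cases "j = j'")
    case True
    then show ?thesis using Suc.prems by (auto simp: comb_less_def comb_cover_def)
  next
    case False
    then have mid: "(i, j') \<in> comb_elems s t" using Suc.prems by (auto simp: comb_elems_def)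
    then have "comb_cover s t (i, j') (i, Suc j')" using Suc.prems by (simp add: comb_cover_def)
    then show ?thesis using Suc.IH[OF Suc.prems(1) mid] False Suc.prems(3)
      by (simp add: comb_less_def)
  qed
qed simp

lemma comb_less_on_spine:
  assumes "1 \<le> t" "1 \<le> i" "i < i'" "i' \<le> s"
  shows "comb_less s t (i, 1) (i', 1)"
  using assms
proof (induction i')
  case (Suc i')
  have "comb_cover s t (i', 1) (Suc i', 1)"
    using Suc.prems by (simp add: comb_cover_def comb_elems_def)
  then show ?case using Suc by (cases "i = i'") (simp_all add: comb_less_def)
qed simp

lemma comb_below_imp_comb_less:
  assumes "1 \<le> t" "comb_below s t a b"
  shows "comb_less s t a b"
proof -
  obtain i j i' j' where a: "a = (i, j)" and b: "b = (i', j')" by (cases a, cases b)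
  show ?thesis
  proof (cases "i = i' \<and> j < j'")
    case True
    then show ?thesis using assms a b comb_less_in_tooth by (auto simp: comb_below_def)
  next
    case False
    then have "j = 1" "i < i'" using assms a b by (auto simp: comb_below_def)
    then have spine: "comb_less s t (i, 1) (i', 1)"
      using assms a b comb_less_on_spine by (auto simp: comb_below_def comb_elems_def)
    have "comb_less s t (i', 1) (i', j')" if "1 < j'"
      using assms b that comb_less_in_tooth by (auto simp: comb_below_def comb_elems_def)
    then show ?thesis using spine \<open>j = 1\<close> a b assms(2)
      by (cases "j' = 1") (auto simp: comb_below_def comb_elems_def comb_less_def)
  qed
qed

text \<open>The label \<open>x = (i - 1) t + j\<close> of \<open>e\<^sub>i\<^sub>j\<close> has \<open>(x - 1) div t = i - 1\<close> and
  \<open>(x - 1) mod t = j - 1\<close>: below \<open>y\<close> in \<open>K\<^sup>\<beta>\<^sub>s\<^sub>t\<close> are exactly the smaller labels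
  in the same tooth and, if \<open>y\<close> lies in a later tooth, the spine labels smaller than \<open>y\<close>.\<close>

definition comb_rel :: "nat \<Rightarrow> nat \<Rightarrow> nat \<Rightarrow> nat \<Rightarrow> bool" where
  "comb_rel s t x y \<longleftrightarrow> 1 \<le> x \<and> x < y \<and> y \<le> s * t \<and>
     ((x - 1) div t = (y - 1) div t \<or> (x - 1) mod t = 0)"

lemma comb_label_div_mod:
  assumes "1 \<le> j" "j \<le> t"
  shows "(comb_label t (i, j) - 1) div t = i - 1" "(comb_label t (i, j) - 1) mod t = j - 1"
proof -
  have e: "comb_label t (i, j) - 1 = (j - 1) + (i - 1) * t"
    using assms by (simp add: comb_label_def)
  have "0 < t" "j - 1 < t" using assms by auto
  then show "(comb_label t (i, j) - 1) div t = i - 1" "(comb_label t (i, j) - 1) mod t = j - 1"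
    unfolding e by simp_all
qed

lemma combB_less_iff_comb_rel:
  assumes "1 \<le> t"
  shows "combB_less s t x y \<longleftrightarrow> comb_rel s t x y"
proof
  assume "combB_less s t x y"
  then obtain i j i' j' where below: "comb_below s t (i, j) (i', j')"
    and x: "x = comb_label t (i, j)" and y: "y = comb_label t (i', j')"
    by (auto simp: combB_less_def dest: comb_less_imp_comb_below)
  have r: "1 \<le> i" "1 \<le> j" "j \<le> t" "1 \<le> i'" "i' \<le> s" "1 \<le> j'" "j' \<le> t"
    using below by (auto simp: comb_below_def comb_elems_def)
  have "(i' - 1) * t + j' \<le> (i' - 1) * t + t" using r by simp
  also have "\<dots> = i' * t" using r by (cases i') auto
  also have "\<dots> \<le> s * t" using r by simp
  finally have "y \<le> s * t" by (simp add: y comb_label_def)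
  moreover have "x < y"
  proof (cases "i = i'")
    case True
    then show ?thesis using below x y by (auto simp: comb_below_def comb_label_def)
  next
    case False
    then have "j = 1" "i < i'" using below by (auto simp: comb_below_def)
    have "(i - 1) * t + t = i * t" using r by (cases i) auto
    also have "\<dots> \<le> (i' - 1) * t" using \<open>i < i'\<close> by (intro mult_le_mono1) linarith
    finally have "(i - 1) * t + t \<le> (i' - 1) * t" .
    then show ?thesis using x y \<open>j = 1\<close> r by (simp add: comb_label_def)
  qed
  moreover have "1 \<le> x" using x r by (simp add: comb_label_def)
  ultimately show "comb_rel s t x y"
    using below r comb_label_div_mod[of j t i] comb_label_div_mod[of j' t i'] x y
    by (auto simp: comb_rel_def comb_below_def)
next
  assume R: "comb_rel s t x y"
  define a where "a = ((x - 1) div t + 1, (x - 1) mod t + 1)"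
  define b where "b = ((y - 1) div t + 1, (y - 1) mod t + 1)"
  have labels: "comb_label t a = x" "comb_label t b = y"
    using R assms unfolding a_def b_def comb_rel_def comb_label_def by simp_all
  have "y - 1 < s * t" using R unfolding comb_rel_def by linarith
  then have yl: "(y - 1) div t < s" by (rule less_mult_imp_div_less)
  have "x - 1 \<le> y - 1" using R unfolding comb_rel_def by linarith
  then have xl: "(x - 1) div t \<le> (y - 1) div t" by (rule div_le_mono)
  have "Suc ((x - 1) mod t) \<le> t" "Suc ((y - 1) mod t) \<le> t" using assms by (auto intro: Suc_leI)
  then have elems: "a \<in> comb_elems s t" "b \<in> comb_elems s t"
    using yl xl by (auto simp: a_def b_def comb_elems_def)
  have "comb_below s t a b"
  proof (cases "(x - 1) div t = (y - 1) div t")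
    case True
    have "x - 1 < y - 1" using R unfolding comb_rel_def by linarith
    then have "(x - 1) mod t < (y - 1) mod t" using True
      by (metis div_mult_mod_eq nat_add_left_cancel_less)
    then show ?thesis using elems True by (simp add: comb_below_def a_def b_def)
  next
    case False
    then show ?thesis using elems xl R by (simp add: comb_below_def comb_rel_def a_def b_def)
  qed
  then show "combB_less s t x y"
    using labels comb_below_imp_comb_less[OF assms] unfolding combB_less_def by blast
qed

section \<open>Relative order of entries in a list\<close>

fun precedes :: "'a list \<Rightarrow> 'a \<Rightarrow> 'a \<Rightarrow> bool" where
  "precedes [] x y = False"
| "precedes (a # l) x y = ((a = x \<and> y \<in> set l) \<or> precedes l x y)"

lemma precedes_in_set: "precedes l x y \<Longrightarrow> x \<in> set l \<and> y \<in> set l"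
  by (induction l) auto

lemma precedes_iff_nth: "precedes l x y \<longleftrightarrow> (\<exists>i j. i < j \<and> j < length l \<and> l ! i = x \<and> l ! j = y)"
proof (induction l)
  case (Cons a l)
  show ?case
  proof
    assume "precedes (a # l) x y"
    then consider "a = x" "y \<in> set l" | "precedes l x y" by auto
    then show "\<exists>i j. i < j \<and> j < length (a # l) \<and> (a # l) ! i = x \<and> (a # l) ! j = y"
    proof cases
      case 1
      then obtain j where "j < length l" "l ! j = y" by (auto simp: in_set_conv_nth)
      then show ?thesis using 1 by (intro exI[of _ 0] exI[of _ "Suc j"]) auto
    next
      case 2
      then obtain i j where "i < j \<and> j < length l \<and> l ! i = x \<and> l ! j = y" using Cons.IH by auto
      then show ?thesis by (intro exI[of _ "Suc i"] exI[of _ "Suc j"]) auto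
    qed
  next
    assume "\<exists>i j. i < j \<and> j < length (a # l) \<and> (a # l) ! i = x \<and> (a # l) ! j = y"
    then obtain i j where h: "i < j" "j < length (a # l)" "(a # l) ! i = x" "(a # l) ! j = y"
      by blast
    then obtain j' where j: "j = Suc j'" by (cases j) auto
    show "precedes (a # l) x y"
    proof (cases i)
      case 0
      then show ?thesis using h j by auto
    next
      case (Suc i')
      then show ?thesis using Cons.IH h j by auto
    qed
  qed
qed simp

lemma precedes_filter: "precedes (filter P l) x y \<longleftrightarrow> precedes l x y \<and> P x \<and> P y"
  by (induction l) (auto dest: precedes_in_set)

lemma precedes_append:
  "precedes (l1 @ l2) x y \<longleftrightarrow> precedes l1 x y \<or> (x \<in> set l1 \<and> y \<in> set l2) \<or> precedes l2 x y"
  by (induction l1) (auto dest: precedes_in_set)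

lemma precedes_trans: "distinct l \<Longrightarrow> precedes l x y \<Longrightarrow> precedes l y z \<Longrightarrow> precedes l x z"
  by (induction l) (auto dest: precedes_in_set)

lemma precedes_asym: "distinct l \<Longrightarrow> precedes l x y \<Longrightarrow> \<not> precedes l y x"
  by (induction l) (auto dest: precedes_in_set)

lemma precedes_total: "x \<in> set l \<Longrightarrow> y \<in> set l \<Longrightarrow> x \<noteq> y \<Longrightarrow> precedes l x y \<or> precedes l y x"
  by (induction l) auto

lemma precedes_sorted_wrt:
  "sorted_wrt R l \<Longrightarrow> precedes l x y \<Longrightarrow> R x y"
  by (induction l) (auto dest: precedes_in_set)

lemma precedes_if_sorted_wrt_less:
  "sorted_wrt (<) (l :: 'a :: linorder list) \<Longrightarrow> x \<in> set l \<Longrightarrow> y \<in> set l \<Longrightarrow> x < y \<Longrightarrow> precedes l x y"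
  by (induction l) auto

lemma sorted_wrt_less_if_precedes:
  fixes l :: "'a :: linorder list"
  assumes "distinct l" and "\<And>x y. x \<in> set l \<Longrightarrow> y \<in> set l \<Longrightarrow> x < y \<Longrightarrow> precedes l x y"
  shows "sorted_wrt (<) l"
  using assms
proof (induction l)
  case (Cons a l)
  have "a < y" if "y \<in> set l" for y
    using that Cons.prems precedes_asym[OF Cons.prems(1), of y a]
    by (metis linorder_neqE list.set_intros precedes.simps(2) distinct.simps(2))
  then show ?case using Cons by (auto intro: precedes.simps(2)[THEN iffD2])
qed simp

lemma precedes_take:
  assumes "distinct l" "precedes l x y" "y \<in> set (take p l)"
  shows "x \<in> set (take p l)"
proof -
  have "y \<notin> set (drop p l)" using assms(1,3)
    by (metis append_take_drop_id disjoint_iff distinct_append)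
  then show ?thesis using assms(2) precedes_append[of "take p l" "drop p l"]
    by (auto dest: precedes_in_set)
qed

lemma distinct_if_distinct_filters:
  "distinct (filter P l) \<Longrightarrow> distinct (filter (\<lambda>x. \<not> P x) l) \<Longrightarrow> distinct l"
  by (induction l) (auto split: if_splits)

lemma lin_ext_combB_iff:
  assumes "1 \<le> t"
  shows "\<sigma> \<in> lin_ext_combB s t \<longleftrightarrow> distinct \<sigma> \<and> set \<sigma> = {1..s * t} \<and>
     (\<forall>x y. comb_rel s t x y \<longrightarrow> precedes \<sigma> x y)"
proof -
  have "(\<forall>p q. p < length \<sigma> \<and> q < length \<sigma> \<and> comb_rel s t (\<sigma> ! p) (\<sigma> ! q) \<longrightarrow> p < q) \<longleftrightarrow>
      (\<forall>x y. comb_rel s t x y \<longrightarrow> precedes \<sigma> x y)"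
    if "distinct \<sigma>" "set \<sigma> = {1..s * t}"
  proof
    assume H: "\<forall>p q. p < length \<sigma> \<and> q < length \<sigma> \<and> comb_rel s t (\<sigma> ! p) (\<sigma> ! q) \<longrightarrow> p < q"
    show "\<forall>x y. comb_rel s t x y \<longrightarrow> precedes \<sigma> x y"
    proof (intro allI impI)
      fix x y assume R: "comb_rel s t x y"
      then have "x \<in> set \<sigma>" "y \<in> set \<sigma>" using that(2) by (auto simp: comb_rel_def)
      then obtain i j where "i < length \<sigma>" "\<sigma> ! i = x" "j < length \<sigma>" "\<sigma> ! j = y"
        by (auto simp: in_set_conv_nth)
      then show "precedes \<sigma> x y" unfolding precedes_iff_nth using H R by blast
    qed
  next
    assume H: "\<forall>x y. comb_rel s t x y \<longrightarrow> precedes \<sigma> x y"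
    show "\<forall>p q. p < length \<sigma> \<and> q < length \<sigma> \<and> comb_rel s t (\<sigma> ! p) (\<sigma> ! q) \<longrightarrow> p < q"
    proof (intro allI impI)
      fix p q assume a: "p < length \<sigma> \<and> q < length \<sigma> \<and> comb_rel s t (\<sigma> ! p) (\<sigma> ! q)"
      then obtain i j where "i < j" "j < length \<sigma>" "\<sigma> ! i = \<sigma> ! p" "\<sigma> ! j = \<sigma> ! q"
        using H unfolding precedes_iff_nth by blast
      then show "p < q" using a that(1) nth_eq_iff_index_eq by (metis order.strict_trans)
    qed
  qed
  then show ?thesis unfolding lin_ext_combB_def combB_less_iff_comb_rel[OF assms] by blast
qed

lemma avoids_321_iff_precedes:
  assumes "distinct \<sigma>"
  shows "avoids_321 \<sigma> \<longleftrightarrow> \<not> (\<exists>x y z. precedes \<sigma> x y \<and> precedes \<sigma> y z \<and> y < x \<and> z < y)"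
proof -
  have "(\<exists>x y z. precedes \<sigma> x y \<and> precedes \<sigma> y z \<and> y < x \<and> z < y) \<longleftrightarrow>
      (\<exists>a b c. a < b \<and> b < c \<and> c < length \<sigma> \<and> \<sigma> ! a > \<sigma> ! b \<and> \<sigma> ! b > \<sigma> ! c)"
  proof
    assume "\<exists>x y z. precedes \<sigma> x y \<and> precedes \<sigma> y z \<and> y < x \<and> z < y"
    then obtain a b b' c where "a < b" "b < length \<sigma>" "b' < c" "c < length \<sigma>" "\<sigma> ! b = \<sigma> ! b'"
        "\<sigma> ! a > \<sigma> ! b" "\<sigma> ! b' > \<sigma> ! c"
      unfolding precedes_iff_nth by metis
    moreover from this have "b = b'" using assms nth_eq_iff_index_eq by (metis order.strict_trans)
    ultimately show "\<exists>a b c. a < b \<and> b < c \<and> c < length \<sigma> \<and> \<sigma> ! a > \<sigma> ! b \<and> \<sigma> ! b > \<sigma> ! c"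
      by blast
  next
    assume "\<exists>a b c. a < b \<and> b < c \<and> c < length \<sigma> \<and> \<sigma> ! a > \<sigma> ! b \<and> \<sigma> ! b > \<sigma> ! c"
    then obtain a b c where h: "a < b" "b < c" "c < length \<sigma>" "\<sigma> ! a > \<sigma> ! b" "\<sigma> ! b > \<sigma> ! c"
      by blast
    have "precedes \<sigma> (\<sigma> ! a) (\<sigma> ! b)" "precedes \<sigma> (\<sigma> ! b) (\<sigma> ! c)"
      unfolding precedes_iff_nth using h by (metis order.strict_trans)+
    then show "\<exists>x y z. precedes \<sigma> x y \<and> precedes \<sigma> y z \<and> y < x \<and> z < y"
      using h by blast
  qed
  then show ?thesis unfolding avoids_321_def by blast
qed

lemma avoids_321_filter:
  "distinct \<sigma> \<Longrightarrow> avoids_321 \<sigma> \<Longrightarrow> avoids_321 (filter P \<sigma>)"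
  by (simp add: avoids_321_iff_precedes precedes_filter)

lemma avoids_321_sorted_after:
  assumes "distinct (A @ x # D)" "avoids_321 (A @ x # D)"
  shows "sorted_wrt (<) (filter (\<lambda>y. y < x) D)"
proof (rule sorted_wrt_less_if_precedes)
  show "distinct (filter (\<lambda>y. y < x) D)" using assms(1) by simp
  fix y z assume yz: "y \<in> set (filter (\<lambda>y. y < x) D)" "z \<in> set (filter (\<lambda>y. y < x) D)" "y < z"
  then have "y \<noteq> z" "y \<in> set D" "z \<in> set D" by auto
  then have "precedes D y z \<or> precedes D z y" using precedes_total by metis
  moreover have "\<not> precedes D z y"
  proof
    assume "precedes D z y"
    then have "precedes (A @ x # D) x z" "precedes (A @ x # D) z y"
      using \<open>z \<in> set D\<close> by (simp_all add: precedes_append)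
    moreover have "z < x" "y < z" using yz by auto
    ultimately show False using assms avoids_321_iff_precedes by blast
  qed
  ultimately show "precedes (filter (\<lambda>y. y < x) D) y z" using yz by (simp add: precedes_filter)
qed

section \<open>Interleaving two lists along a Boolean mask\<close>

fun interleave :: "bool list \<Rightarrow> 'a list \<Rightarrow> 'a list \<Rightarrow> 'a list" where
  "interleave [] xs ys = []"
| "interleave (b # bs) xs ys =
     (if b then hd ys # interleave bs xs (tl ys) else hd xs # interleave bs (tl xs) ys)"

abbreviation ntrue :: "bool list \<Rightarrow> nat" where "ntrue r \<equiv> length (filter id r)"
abbreviation nfalse :: "bool list \<Rightarrow> nat" where "nfalse r \<equiv> length (filter Not r)"

lemma length_eq_ntrue_plus_nfalse: "length r = ntrue r + nfalse r"
  by (induction r) auto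

lemma length_interleave[simp]: "length (interleave ms xs ys) = length ms"
  by (induction ms arbitrary: xs ys) auto

lemma interleave_filter_map:
  "nfalse ms = length xs \<Longrightarrow> ntrue ms = length ys \<Longrightarrow>
    (\<forall>x\<in>set xs. \<not> P x) \<Longrightarrow> (\<forall>y\<in>set ys. P y) \<Longrightarrow>
    filter P (interleave ms xs ys) = ys \<and> filter (\<lambda>x. \<not> P x) (interleave ms xs ys) = xs \<and>
    map P (interleave ms xs ys) = ms \<and> set (interleave ms xs ys) = set xs \<union> set ys"
proof (induction ms arbitrary: xs ys)
  case (Cons b ms)
  then show ?case by (cases b; cases xs; cases ys) auto
qed simp

lemma interleave_partition: "(\<And>x. x \<in> set zs \<Longrightarrow> Q x \<longleftrightarrow> \<not> P x) \<Longrightarrow>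
   interleave (map P zs) (filter Q zs) (filter P zs) = zs"
  by (induction zs) auto

lemma interleave_append:
  "interleave (r1 @ r2) xs ys =
     interleave r1 xs ys @ interleave r2 (drop (nfalse r1) xs) (drop (ntrue r1) ys)"
  by (induction r1 arbitrary: xs ys) (auto simp: drop_Suc drop_tl)

lemma interleave_replicate_False:
  "interleave (replicate n False) xs ys = take n xs" if "n \<le> length xs"
  using that
proof (induction n arbitrary: xs)
  case (Suc n) then show ?case by (cases xs) auto
qed simp

lemma interleave_replicate_True:
  "interleave (replicate n True) xs ys = take n ys" if "n \<le> length ys"
  using that
proof (induction n arbitrary: ys)
  case (Suc n) then show ?case by (cases ys) auto
qed simp

lemma sorted_bool_list_eq_replicate:
  "sorted (r :: bool list) \<Longrightarrow> r = replicate (nfalse r) False @ replicate (ntrue r) True"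
  by (induction r) (auto simp: filter_id_conv filter_empty_conv replicate_length_same)

lemma sorted_interleave:
  fixes xs ys :: "'a :: linorder list"
  assumes "sorted ms" "sorted xs" "sorted ys" "\<forall>x\<in>set xs. \<forall>y\<in>set ys. x \<le> y"
    "nfalse ms = length xs" "ntrue ms = length ys"
  shows "sorted (interleave ms xs ys)"
proof -
  have "interleave ms xs ys =
      interleave (replicate (nfalse ms) False @ replicate (ntrue ms) True) xs ys"
    using sorted_bool_list_eq_replicate[OF assms(1)] by simp
  also have "\<dots> = xs @ ys"
    using assms(5,6)
    by (simp add: interleave_append interleave_replicate_False interleave_replicate_True)
  finally show ?thesis using assms(2,3,4) by (simp add: sorted_append)
qed


section \<open>Counting Boolean masks\<close>

lemma finite_bool_lists_length_eq: "finite {r :: bool list. length r = a \<and> P r}"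
  by (rule finite_subset[of _ "{r. set r \<subseteq> UNIV \<and> length r = a}"])
    (use finite_lists_length_eq[of "UNIV :: bool set" a] in auto)

lemma card_bool_lists_ntrue: "card {r :: bool list. length r = a \<and> ntrue r = j} = a choose j"
proof -
  have ntrue_eq: "ntrue r = card {i. i < length r \<and> r ! i}" for r
    by (simp add: length_filter_conv_card)
  have "bij_betw (\<lambda>r. {i. i < a \<and> r ! i}) {r. length r = a \<and> ntrue r = j}
      {B. B \<subseteq> {..<a} \<and> card B = j}"
  proof (rule bij_betw_byWitness[where f' = "\<lambda>B. map (\<lambda>i. i \<in> B) [0..<a]"])
    show "\<forall>r\<in>{r. length r = a \<and> ntrue r = j}. map (\<lambda>i. i \<in> {i. i < a \<and> r ! i}) [0..<a] = r"
      by (simp add: list_eq_iff_nth_eq)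
    have indices: "{i. i < a \<and> map (\<lambda>i. i \<in> B) [0..<a] ! i} = B" if "B \<subseteq> {..<a}" for B
      using that by auto
    then show "\<forall>B\<in>{B. B \<subseteq> {..<a} \<and> card B = j}. {i. i < a \<and> map (\<lambda>i. i \<in> B) [0..<a] ! i} = B"
      by blast
    show "(\<lambda>r. {i. i < a \<and> r ! i}) ` {r. length r = a \<and> ntrue r = j} \<subseteq> {B. B \<subseteq> {..<a} \<and> card B = j}"
      by (auto simp: ntrue_eq)
    show "(\<lambda>B. map (\<lambda>i. i \<in> B) [0..<a]) ` {B. B \<subseteq> {..<a} \<and> card B = j} \<subseteq>
        {r. length r = a \<and> ntrue r = j}"
      using indices by (auto simp: ntrue_eq)
  qed
  then show ?thesis using n_subsets[of "{..<a}" j] by (simp add: bij_betw_same_card)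
qed

lemma bool_lists_sorted_suffix_eq_UN:
  "{r :: bool list. length r = a + b \<and> ntrue r = c \<and> sorted (drop a r)} =
    (\<Union>j\<in>{c - b..c}. (\<lambda>r1. r1 @ replicate (b - (c - j)) False @ replicate (c - j) True) `
      {r1. length r1 = a \<and> ntrue r1 = j})"
    (is "?L = (\<Union>j\<in>{c - b..c}. ?g j ` ?S j)")
proof (intro set_eqI iffI)
  fix r assume "r \<in> ?L"
  then have r: "length r = a + b" "ntrue r = c" "sorted (drop a r)" by auto
  define j where "j = ntrue (take a r)"
  define r2 where "r2 = drop a r"
  have c: "c = j + ntrue r2" using r(2) unfolding j_def r2_def
    by (metis append_take_drop_id filter_append length_append)
  have "length r2 = b" using r(1) by (simp add: r2_def)
  then have "ntrue r2 \<le> b" "nfalse r2 = b - ntrue r2"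
    using length_filter_le[of id r2] length_eq_ntrue_plus_nfalse[of r2] by simp_all
  moreover have "r2 = replicate (nfalse r2) False @ replicate (ntrue r2) True"
    using sorted_bool_list_eq_replicate r(3) by (simp add: r2_def)
  moreover have "r = take a r @ r2" by (simp add: r2_def)
  ultimately have "r = ?g j (take a r)" using c by simp
  moreover have "take a r \<in> ?S j" using r(1) by (simp add: j_def)
  moreover have "j \<in> {c - b..c}" using c \<open>ntrue r2 \<le> b\<close> by auto
  ultimately show "r \<in> (\<Union>j\<in>{c - b..c}. ?g j ` ?S j)" by blast
next
  fix r assume "r \<in> (\<Union>j\<in>{c - b..c}. ?g j ` ?S j)"
  then obtain j r1 where "c - b \<le> j" "j \<le> c" "length r1 = a" "ntrue r1 = j" "r = ?g j r1"
    by auto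
  then show "r \<in> ?L" by (auto simp: sorted_append)
qed

lemma card_bool_lists_sorted_suffix:
  "card {r :: bool list. length r = a + b \<and> ntrue r = c \<and> sorted (drop a r)} =
    (\<Sum>j = c - b..c. a choose j)"
proof -
  define g where "g j r1 = r1 @ replicate (b - (c - j)) False @ replicate (c - j) True"
    for j and r1 :: "bool list"
  define S where "S j = {r1 :: bool list. length r1 = a \<and> ntrue r1 = j}" for j
  have take_g: "take a (g j r1) = r1" if "r1 \<in> S j" for j r1 using that by (simp add: g_def S_def)
  have "card {r :: bool list. length r = a + b \<and> ntrue r = c \<and> sorted (drop a r)} =
      card (\<Union>j\<in>{c - b..c}. g j ` S j)"
    using bool_lists_sorted_suffix_eq_UN[of a b c] by (simp add: g_def S_def)
  also have "\<dots> = (\<Sum>j = c - b..c. card (g j ` S j))"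
  proof (rule card_UN_disjoint)
    show "\<forall>j\<in>{c - b..c}. finite (g j ` S j)" by (simp add: S_def finite_bool_lists_length_eq)
    show "\<forall>i\<in>{c - b..c}. \<forall>j\<in>{c - b..c}. i \<noteq> j \<longrightarrow> g i ` S i \<inter> g j ` S j = {}"
    proof (intro ballI impI)
      fix i j :: nat assume "i \<noteq> j"
      have False if "r1 \<in> S i" "r1' \<in> S j" "g i r1 = g j r1'" for r1 r1'
      proof -
        have "r1 = r1'" using that take_g by metis
        then show False using that \<open>i \<noteq> j\<close> by (simp add: S_def)
      qed
      then show "g i ` S i \<inter> g j ` S j = {}" by blast
    qed
  qed simp
  also have "\<dots> = (\<Sum>j = c - b..c. card (S j))"
  proof -
    have "inj_on (g j) (S j)" for j by (rule inj_on_inverseI[where g = "take a"]) (rule take_g)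
    then show ?thesis by (simp add: card_image)
  qed
  finally show ?thesis by (simp add: S_def card_bool_lists_ntrue)
qed

lemma comb_rel_mono: "comb_rel (s - 1) t x y \<Longrightarrow> comb_rel s t x y"
  by (auto simp: comb_rel_def intro: le_trans[OF _ mult_le_mono1[of "s - 1" s]])

lemma comb_rel_restrict: "comb_rel s t x y \<Longrightarrow> y \<le> (s - 1) * t \<Longrightarrow> comb_rel (s - 1) t x y"
  by (simp add: comb_rel_def)

lemma comb_rel_last_tooth:
  assumes "1 \<le> s" "1 \<le> t" "(s - 1) * t < x" "x < y" "y \<le> s * t"
  shows "comb_rel s t x y"
proof -
  have "(z - 1) div t = s - 1" if "(s - 1) * t < z" "z \<le> s * t" for z
  proof -
    have "(s - 1) * t div t \<le> (z - 1) div t" using that(1) by (intro div_le_mono) linarith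
    moreover have "z - 1 < s * t" using that by linarith
    then have "(z - 1) div t < s" by (rule less_mult_imp_div_less)
    ultimately show ?thesis using assms(2) by simp
  qed
  then show ?thesis using assms by (auto simp: comb_rel_def)
qed

lemma comb_rel_spine_to_last_root:
  assumes "1 \<le> t" "1 \<le> x" "x \<le> (s - 1) * t" "(x - 1) mod t = 0"
  shows "comb_rel s t x ((s - 1) * t + 1)"
proof -
  have "(s - 1) * t + 1 \<le> s * t" using assms by (cases s) auto
  then show ?thesis using assms by (simp add: comb_rel_def)
qed

text \<open>\<open>(s - 2) t + 1\<close> is the root of the next-to-last tooth.\<close>

lemma comb_rel_into_last_tooth:
  assumes "comb_rel s t x y" "x \<le> (s - 1) * t" "(s - 1) * t < y" "1 \<le> t"
  shows "(x - 1) mod t = 0" "x \<le> (s - 2) * t + 1"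
proof -
  have "1 \<le> x" using assms(1) by (simp add: comb_rel_def)
  then have "x - 1 < (s - 1) * t" using assms(2) by linarith
  then have x_div: "(x - 1) div t < s - 1" by (rule less_mult_imp_div_less)
  have "(s - 1) * t div t \<le> (y - 1) div t" using assms(3) by (intro div_le_mono) linarith
  then have "(x - 1) div t \<noteq> (y - 1) div t" using x_div assms(4) by simp
  then show mod0: "(x - 1) mod t = 0" using assms(1) by (simp add: comb_rel_def)
  have "x - 1 = (x - 1) div t * t" using mod0 by (metis add.right_neutral div_mult_mod_eq)
  also have "\<dots> \<le> (s - 2) * t" using x_div by (intro mult_le_mono1) linarith
  finally show "x \<le> (s - 2) * t + 1" by linarith
qed

lemma lin_ext_filter_last_tooth:
  assumes "1 \<le> s" "1 \<le> t" "\<sigma> \<in> lin_ext_combB s t"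
  shows "filter (\<lambda>x. (s - 1) * t < x) \<sigma> = [(s - 1) * t + 1..<s * t + 1]"
proof -
  have \<sigma>: "distinct \<sigma>" "set \<sigma> = {1..s * t}" "\<And>x y. comb_rel s t x y \<Longrightarrow> precedes \<sigma> x y"
    using assms lin_ext_combB_iff by blast+
  have "sorted_wrt (<) (filter (\<lambda>x. (s - 1) * t < x) \<sigma>)" (is "sorted_wrt (<) ?big")
  proof (rule sorted_wrt_less_if_precedes)
    fix x y assume "x \<in> set ?big" "y \<in> set ?big" "x < y"
    moreover from this have "comb_rel s t x y"
      using \<sigma>(2) assms(1,2) by (auto intro!: comb_rel_last_tooth)
    ultimately show "precedes ?big x y" using \<sigma>(3) by (simp add: precedes_filter)
  qed (use \<sigma> in simp)
  moreover have "set (filter (\<lambda>x. (s - 1) * t < x) \<sigma>) = set [(s - 1) * t + 1..<s * t + 1]"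
    using \<sigma>(2) assms(1,2) by auto
  ultimately show ?thesis
    by (metis sorted_distinct_set_unique strict_sorted_iff sorted_upt distinct_upt)
qed

lemma lin_ext_restrict:
  assumes "1 \<le> t" "\<sigma> \<in> lin_ext_combB s t"
  shows "filter (\<lambda>x. x \<le> (s - 1) * t) \<sigma> \<in> lin_ext_combB (s - 1) t"
proof -
  have \<sigma>: "distinct \<sigma>" "set \<sigma> = {1..s * t}" "\<And>x y. comb_rel s t x y \<Longrightarrow> precedes \<sigma> x y"
    using assms lin_ext_combB_iff by blast+
  have "(s - 1) * t \<le> s * t" by simp
  then have "set (filter (\<lambda>x. x \<le> (s - 1) * t) \<sigma>) = {1..(s - 1) * t}"
    using \<sigma>(2) order_trans[OF _ \<open>(s - 1) * t \<le> s * t\<close>] by auto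
  moreover have "precedes (filter (\<lambda>x. x \<le> (s - 1) * t) \<sigma>) x y" if "comb_rel (s - 1) t x y" for x y
    using that \<sigma>(3)[OF comb_rel_mono[OF that]] by (auto simp: precedes_filter comb_rel_def)
  ultimately show ?thesis using \<sigma>(1) assms(1) by (simp add: lin_ext_combB_iff)
qed

section \<open>Inserting the last tooth\<close>

text \<open>For \<open>m = s t\<close> the last two conditions are void, and \<open>F s t k\<close> will turn out to be
  the size of \<open>avoiders (s - 1) t (k - 1)\<close>.\<close>

definition avoiders :: "nat \<Rightarrow> nat \<Rightarrow> nat \<Rightarrow> nat list set" where
  "avoiders s t m = {\<sigma> \<in> lin_ext_combB s t. avoids_321 \<sigma> \<and>
     (s - 1) * t + 1 \<in> set (take m \<sigma>) \<and> sorted (drop m \<sigma>)}"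

definition tooth_tail :: "nat \<Rightarrow> nat \<Rightarrow> nat list" where
  "tooth_tail s t = [(s - 1) * t + 2..<s * t + 1]"

lemma length_tooth_tail: "1 \<le> s \<Longrightarrow> length (tooth_tail s t) = t - 1"
  by (cases s) (auto simp: tooth_tail_def)

text \<open>With \<open>N = (s - 1) t\<close>, every \<open>\<sigma> \<in> avoiders s t m\<close> is obtained from the word
  \<open>\<tau> \<in> avoiders (s - 1) t p\<close> of its labels \<open>\<le> N\<close> by putting \<open>N + 1\<close> at position \<open>p < m\<close> and merging the rest of the last
  tooth, in increasing order, into the remainder; the mask \<open>r\<close> marks the positions
  after \<open>N + 1\<close> taken by the last tooth.\<close>

definition insert_tooth :: "nat \<Rightarrow> nat \<Rightarrow> nat \<Rightarrow> nat list \<Rightarrow> bool list \<Rightarrow> nat list" where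
  "insert_tooth s t p \<tau> r = take p \<tau> @ ((s - 1) * t + 1) # interleave r (drop p \<tau>) (tooth_tail s t)"

definition tooth_masks :: "nat \<Rightarrow> nat \<Rightarrow> nat \<Rightarrow> nat \<Rightarrow> bool list set" where
  "tooth_masks s t m p =
     {r. length r = s * t - p - 1 \<and> ntrue r = t - 1 \<and> sorted (drop (m - p - 1) r)}"

locale tooth_insertion =
  fixes s t p :: nat and \<tau> :: "nat list" and r :: "bool list"
  assumes two_le_s: "2 \<le> s" and two_le_t: "2 \<le> t"
    and distinct_\<tau>: "distinct \<tau>" and set_\<tau>: "set \<tau> = {1..(s - 1) * t}"
    and length_r: "length r = s * t - p - 1" and ntrue_r: "ntrue r = t - 1"
begin

abbreviation N :: nat where "N \<equiv> (s - 1) * t"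
abbreviation tail :: "nat list" where "tail \<equiv> interleave r (drop p \<tau>) (tooth_tail s t)"
abbreviation \<sigma> :: "nat list" where "\<sigma> \<equiv> insert_tooth s t p \<tau> r"

lemma st_eq: "s * t = N + t"
  using two_le_s by (cases s) auto

lemma length_\<tau>: "length \<tau> = N"
  using distinct_card[OF distinct_\<tau>] set_\<tau> by simp

lemma p_le_N: "p \<le> N"
  using length_r ntrue_r st_eq two_le_t length_filter_le[of id r] by linarith

lemma nfalse_r: "nfalse r = N - p"
  using length_eq_ntrue_plus_nfalse[of r] length_r ntrue_r st_eq two_le_t by arith

lemma tail_facts:
  "filter (\<lambda>x. N < x) tail = tooth_tail s t" "filter (\<lambda>x. x \<le> N) tail = drop p \<tau>"
  "map (\<lambda>x. N < x) tail = r" "set tail = set (drop p \<tau>) \<union> {N + 2..s * t}"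
proof -
  have "nfalse r = length (drop p \<tau>)"
    using nfalse_r length_\<tau> by simp
  moreover have "ntrue r = length (tooth_tail s t)" using ntrue_r length_tooth_tail two_le_s by simp
  moreover have "set (drop p \<tau>) \<subseteq> {1..N}" using set_\<tau> by (auto dest: in_set_dropD)
  moreover have set_tooth: "set (tooth_tail s t) = {N + 2..s * t}" by (auto simp: tooth_tail_def)
  ultimately have "filter (\<lambda>x. N < x) tail = tooth_tail s t \<and> filter (\<lambda>x. \<not> N < x) tail = drop p \<tau> \<and>
      map (\<lambda>x. N < x) tail = r \<and> set tail = set (drop p \<tau>) \<union> set (tooth_tail s t)"
    by (intro interleave_filter_map) auto
  then show "filter (\<lambda>x. N < x) tail = tooth_tail s t" "filter (\<lambda>x. x \<le> N) tail = drop p \<tau>"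
    "map (\<lambda>x. N < x) tail = r" "set tail = set (drop p \<tau>) \<union> {N + 2..s * t}"
    using set_tooth by (simp_all add: not_less)
qed

lemma length_take_p: "length (take p \<tau>) = p"
  using p_le_N length_\<tau> by simp

lemma set_take_p: "set (take p \<tau>) \<subseteq> {1..N}"
  using set_\<tau> by (auto dest: in_set_takeD)

lemma set_take_p_small: "\<forall>x\<in>set (take p \<tau>). x \<le> N"
  using set_take_p by auto

lemma take_p: "take p \<sigma> = take p \<tau>"
  and nth_p: "\<sigma> ! p = N + 1"
  and drop_Suc_p: "drop (Suc p) \<sigma> = tail"
  using length_take_p by (simp_all add: insert_tooth_def nth_append)

lemma filter_small: "filter (\<lambda>x. x \<le> N) \<sigma> = \<tau>"
  using set_take_p_small tail_facts(2) by (simp add: insert_tooth_def filter_id_conv)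

lemma filter_big: "filter (\<lambda>x. N < x) \<sigma> = [N + 1..<s * t + 1]"
proof -
  have "filter (\<lambda>x. N < x) \<sigma> = (N + 1) # tooth_tail s t"
    using set_take_p tail_facts(1) by (auto simp: insert_tooth_def filter_empty_conv)
  also have "\<dots> = [N + 1..<s * t + 1]"
    using st_eq two_le_t by (simp add: tooth_tail_def upt_conv_Cons)
  finally show ?thesis .
qed

lemma distinct_insert_tooth: "distinct \<sigma>"
proof -
  have "distinct (filter (\<lambda>x. N < x) \<sigma>)" "distinct (filter (\<lambda>x. \<not> N < x) \<sigma>)"
    using filter_big filter_small distinct_\<tau> by (simp_all add: not_less)
  then show ?thesis by (rule distinct_if_distinct_filters)
qed

lemma set_insert_tooth: "set \<sigma> = {1..s * t}"
proof -
  have "set \<sigma> = set (filter (\<lambda>x. N < x) \<sigma>) \<union> set (filter (\<lambda>x. x \<le> N) \<sigma>)" by auto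
  also have "\<dots> = {1..s * t}" unfolding filter_big filter_small set_\<tau> using st_eq by auto
  finally show ?thesis .
qed

lemma length_insert_tooth: "length \<sigma> = s * t"
  using distinct_card[OF distinct_insert_tooth] set_insert_tooth by simp

lemma precedes_insert_tooth_small: "precedes \<tau> x y \<Longrightarrow> precedes \<sigma> x y"
  using precedes_in_set[of \<tau> x y] set_\<tau> filter_small precedes_filter[of "\<lambda>x. x \<le> N" \<sigma> x y] by auto

lemma precedes_insert_tooth_big:
  assumes "N < x" "x < y" "y \<le> s * t"
  shows "precedes \<sigma> x y"
proof -
  have "precedes [N + 1..<s * t + 1] x y"
    by (rule precedes_if_sorted_wrt_less[OF sorted_wrt_upt]) (use assms in auto)
  then show ?thesis using filter_big precedes_filter[of "\<lambda>x. N < x" \<sigma> x y] by simp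
qed

lemma insert_tooth_lin_ext:
  assumes \<tau>: "\<tau> \<in> lin_ext_combB (s - 1) t" and root: "(s - 2) * t + 1 \<in> set (take p \<tau>)"
  shows "\<sigma> \<in> lin_ext_combB s t"
proof -
  have t1: "1 \<le> t" using two_le_t by simp
  have \<tau>_prec: "comb_rel (s - 1) t x y \<Longrightarrow> precedes \<tau> x y" for x y
    using \<tau> lin_ext_combB_iff[OF t1] by blast
  have "precedes \<sigma> x y" if R: "comb_rel s t x y" for x y
  proof -
    have xy: "1 \<le> x" "x < y" "y \<le> s * t" using R by (auto simp: comb_rel_def)
    consider "y \<le> N" | "N < x" | "x \<le> N" "N < y" by linarith
    then show ?thesis
    proof cases
      case 1
      then show ?thesis using R comb_rel_restrict \<tau>_prec precedes_insert_tooth_small by blast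
    next
      case 2
      then show ?thesis using xy precedes_insert_tooth_big by blast
    next
      case 3
      define q where "q = (s - 2) * t + 1"
      have x_spine: "(x - 1) mod t = 0" and "x \<le> q"
        using comb_rel_into_last_tooth[OF R 3 t1] by (simp_all add: q_def)
      have "s - 1 = Suc (s - 2)" using two_le_s by simp
      then have "N = (s - 2) * t + t" by simp
      then have "q \<le> N" using t1 by (simp add: q_def)
      have "y \<notin> set (take p \<sigma>)" using take_p set_take_p 3 by auto
      moreover have "y \<in> set \<sigma>" using xy set_insert_tooth by simp
      ultimately have "precedes \<sigma> q y"
        using root take_p precedes_append[of "take p \<sigma>" "drop p \<sigma>" q y]
        by (metis append_take_drop_id Un_iff set_append q_def)
      moreover have "precedes \<sigma> x q" if "x \<noteq> q"
        using that \<open>x \<le> q\<close> \<open>q \<le> N\<close> xy x_spine \<tau>_prec precedes_insert_tooth_small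
        by (simp add: comb_rel_def q_def)
      ultimately show ?thesis using precedes_trans[OF distinct_insert_tooth] by blast
    qed
  qed
  then show ?thesis using lin_ext_combB_iff[OF t1] distinct_insert_tooth set_insert_tooth by blast
qed

lemma insert_tooth_avoids_321:
  assumes \<tau>: "avoids_321 \<tau>" and sorted_rest: "sorted (drop p \<tau>)"
  shows "avoids_321 \<sigma>"
proof -
  have "False" if xyz: "precedes \<sigma> x y" "precedes \<sigma> y z" "y < x" "z < y" for x y z
  proof -
    consider "x \<le> N" | "N < y" | "y \<le> N" "N < x" by linarith
    then show False
    proof cases
      case 1
      then have "precedes \<tau> x y" "precedes \<tau> y z"
        using xyz filter_small precedes_filter[of "\<lambda>x. x \<le> N" \<sigma>] by auto
      then show False using \<tau> xyz avoids_321_iff_precedes[OF distinct_\<tau>] by blast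
    next
      case 2
      then have "precedes [N + 1..<s * t + 1] x y"
        using xyz filter_big precedes_filter[of "\<lambda>x. N < x" \<sigma>] by auto
      then show False using precedes_sorted_wrt[OF sorted_wrt_upt] xyz by fastforce
    next
      case 3
      text \<open>\<open>x\<close> belongs to the last tooth, so \<open>y\<close> and \<open>z\<close> come after \<open>N + 1\<close>, where the
        labels \<open>\<le> N\<close> increase.\<close>
      have \<sigma>_eq: "\<sigma> = take p \<tau> @ (N + 1) # tail" by (simp add: insert_tooth_def)
      have "x \<notin> set (take p \<tau>)" using set_take_p 3 by auto
      then have "y \<in> set ((N + 1) # tail)"
        using xyz(1) \<sigma>_eq precedes_append[of "take p \<tau>"] by (auto dest: precedes_in_set)
      then have "y \<notin> set (take p \<tau>)" using distinct_insert_tooth \<sigma>_eq by auto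
      then have "precedes ((N + 1) # tail) y z"
        using xyz(2) \<sigma>_eq precedes_append[of "take p \<tau>"] by (auto dest: precedes_in_set)
      then have "precedes (filter (\<lambda>x. x \<le> N) tail) y z"
        using 3 xyz by (auto simp: precedes_filter)
      then have "y \<le> z" using tail_facts(2) precedes_sorted_wrt sorted_rest by fastforce
      then show False using xyz by simp
    qed
  qed
  then show ?thesis using avoids_321_iff_precedes[OF distinct_insert_tooth] by blast
qed

lemma insert_tooth_sorted_drop:
  assumes "sorted (drop p \<tau>)" "p < m" "sorted (drop (m - p - 1) r)"
  shows "sorted (drop m \<sigma>)"
proof -
  define k where "k = m - p - 1"
  define D where "D = drop p \<tau>"
  define B where "B = tooth_tail s t"
  have "drop m \<sigma> = drop k (drop (Suc p) \<sigma>)" using assms(2) by (simp add: k_def)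
  then have drop_m: "drop m \<sigma> = drop k (interleave r D B)" by (simp only: drop_Suc_p D_def B_def)
  show ?thesis
  proof (cases "k < length r")
    case False
    then show ?thesis using drop_m by simp
  next
    case True
    define r1 where "r1 = take k r"
    have "interleave r D B = interleave (r1 @ drop k r) D B" by (simp add: r1_def)
    also have "\<dots> =
        interleave r1 D B @ interleave (drop k r) (drop (nfalse r1) D) (drop (ntrue r1) B)"
      by (rule interleave_append)
    finally have "drop m \<sigma> = interleave (drop k r) (drop (nfalse r1) D) (drop (ntrue r1) B)"
      using drop_m True by (simp add: r1_def)
    also have "sorted \<dots>"
    proof (rule sorted_interleave)
      show "sorted (drop k r)" using assms(3) by (simp add: k_def)
      show "sorted (drop (nfalse r1) D)" using assms(1) unfolding D_def by (rule sorted_wrt_drop)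
      show "sorted (drop (ntrue r1) B)"
        unfolding B_def tooth_tail_def by (rule sorted_wrt_drop, rule sorted_upt)
      show "\<forall>x\<in>set (drop (nfalse r1) D). \<forall>y\<in>set (drop (ntrue r1) B). x \<le> y"
        using set_\<tau> by (fastforce simp: D_def B_def tooth_tail_def dest: in_set_dropD)
      have "nfalse r = nfalse r1 + nfalse (drop k r)" "ntrue r = ntrue r1 + ntrue (drop k r)"
        by (metis append_take_drop_id filter_append length_append r1_def)+
      moreover have "length D = N - p" "length B = t - 1"
        using length_\<tau> length_tooth_tail two_le_s by (simp_all add: D_def B_def)
      ultimately show "nfalse (drop k r) = length (drop (nfalse r1) D)"
        "ntrue (drop k r) = length (drop (ntrue r1) B)"
        using ntrue_r nfalse_r by simp_all
    qed
    finally show ?thesis .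
  qed
qed

lemma insert_tooth_in_avoiders:
  assumes "\<tau> \<in> avoiders (s - 1) t p" "sorted (drop (m - p - 1) r)" "p < m"
  shows "\<sigma> \<in> avoiders s t m"
proof -
  have "s - 1 - 1 = s - 2" by simp
  then have "\<tau> \<in> lin_ext_combB (s - 1) t" "avoids_321 \<tau>" "(s - 2) * t + 1 \<in> set (take p \<tau>)"
    "sorted (drop p \<tau>)"
    using assms(1) unfolding avoiders_def by auto
  moreover have "N + 1 \<in> set (take m \<sigma>)"
  proof -
    have "p < length \<sigma>" using p_le_N length_insert_tooth st_eq two_le_t by simp
    then have "take m \<sigma> ! p = N + 1" "p < length (take m \<sigma>)" using nth_p assms(3) by simp_all
    then show ?thesis by (metis nth_mem)
  qed
  ultimately show ?thesis
    using insert_tooth_lin_ext insert_tooth_avoids_321 insert_tooth_sorted_drop assms(2,3)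
    by (simp add: avoiders_def)
qed

end

lemma avoiders_lin_ext:
  assumes "1 \<le> t" "\<sigma> \<in> avoiders s t m"
  shows "distinct \<sigma>" "set \<sigma> = {1..s * t}" "length \<sigma> = s * t"
  using assms distinct_card[of \<sigma>] by (auto simp: avoiders_def lin_ext_combB_iff)

lemma finite_avoiders:
  assumes "1 \<le> t"
  shows "finite (avoiders s t m)"
  by (rule finite_subset[OF _ finite_lists_length_le[of "{1..s * t}" "s * t"]])
    (use avoiders_lin_ext[OF assms] in auto)

lemma finite_tooth_masks: "finite (tooth_masks s t m p)"
  unfolding tooth_masks_def by (rule finite_bool_lists_length_eq)

lemma tooth_insertionI:
  assumes "2 \<le> s" "2 \<le> t" "\<tau> \<in> avoiders (s - 1) t p" "r \<in> tooth_masks s t m p"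
  shows "tooth_insertion s t p \<tau> r"
  using assms avoiders_lin_ext[of t \<tau> "s - 1" p] by unfold_locales (auto simp: tooth_masks_def)

lemma insert_tooth_inj:
  assumes "tooth_insertion s t p \<tau> r" "tooth_insertion s t p' \<tau>' r'"
    and eq: "insert_tooth s t p \<tau> r = insert_tooth s t p' \<tau>' r'"
  shows "p = p' \<and> \<tau> = \<tau>' \<and> r = r'"
proof -
  interpret A: tooth_insertion s t p \<tau> r by fact
  interpret B: tooth_insertion s t p' \<tau>' r' by fact
  have "p < s * t" "p' < s * t" using A.p_le_N B.p_le_N A.st_eq A.two_le_t by linarith+
  moreover have "A.\<sigma> ! p = A.\<sigma> ! p'" using A.nth_p B.nth_p eq by simp
  ultimately have "p = p'"
    using nth_eq_iff_index_eq[OF A.distinct_insert_tooth] A.length_insert_tooth by simp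
  moreover have "\<tau> = \<tau>'" using A.filter_small B.filter_small eq by simp
  moreover have "r = r'" using A.drop_Suc_p B.drop_Suc_p A.tail_facts(3) B.tail_facts(3) eq \<open>p = p'\<close>
    by metis
  ultimately show ?thesis by simp
qed

lemma lin_ext_precedes_last_root:
  assumes "1 \<le> t" "\<sigma> \<in> lin_ext_combB s t" "1 \<le> x" "x \<le> (s - 1) * t" "(x - 1) mod t = 0"
  shows "precedes \<sigma> x ((s - 1) * t + 1)"
proof -
  have "comb_rel s t x ((s - 1) * t + 1)" by (rule comb_rel_spine_to_last_root) (use assms in auto)
  then show ?thesis using assms(1,2) lin_ext_combB_iff by blast
qed

lemma lin_ext_eq_insert_tooth:
  fixes s t p :: nat and \<sigma> :: "nat list"
  defines "N \<equiv> (s - 1) * t"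
  assumes s: "2 \<le> s" and t: "2 \<le> t" and lin: "\<sigma> \<in> lin_ext_combB s t"
    and p: "p < length \<sigma>" "\<sigma> ! p = N + 1"
  defines "\<tau> \<equiv> filter (\<lambda>x. x \<le> N) \<sigma>" and "D \<equiv> drop (Suc p) \<sigma>"
  shows "\<sigma> = insert_tooth s t p \<tau> (map (\<lambda>x. N < x) D)"
    and "take p \<tau> = take p \<sigma>" and "drop p \<tau> = filter (\<lambda>x. x \<le> N) D"
    and "filter (\<lambda>x. N < x) D = tooth_tail s t"
proof -
  define A where "A = take p \<sigma>"
  have split: "\<sigma> = A @ (N + 1) # D"
    using id_take_nth_drop[OF p(1)] p(2) by (simp add: A_def D_def)
  have "distinct (A @ (N + 1) # D)"
    using lin t lin_ext_combB_iff split by (metis one_le_numeral order_trans)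
  then have "N + 1 \<notin> set A" by auto
  have N_less: "N < s * t" using s t by (simp add: N_def)
  have "filter (\<lambda>x. N < x) \<sigma> = [N + 1..<s * t + 1]"
    using lin_ext_filter_last_tooth[of s t \<sigma>] s t lin by (simp add: N_def)
  moreover have "[N + 1..<s * t + 1] = (N + 1) # tooth_tail s t"
    using N_less by (simp add: tooth_tail_def N_def upt_conv_Cons del: upt_Suc)
  ultimately have big:
      "filter (\<lambda>x. N < x) A @ (N + 1) # filter (\<lambda>x. N < x) D = (N + 1) # tooth_tail s t"
    using split by simp
  have "filter (\<lambda>x. N < x) A = []"
  proof (cases "filter (\<lambda>x. N < x) A")
    case (Cons a l)
    then have "a \<in> set (filter (\<lambda>x. N < x) A)" by simp
    moreover have "a = N + 1" using big Cons by simp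
    ultimately have "N + 1 \<in> set A" by simp
    then show ?thesis using \<open>N + 1 \<notin> set A\<close> by simp
  qed simp
  then have A_small: "\<forall>x\<in>set A. x \<le> N" by (auto simp: filter_empty_conv)
  show tail: "filter (\<lambda>x. N < x) D = tooth_tail s t"
    using big \<open>filter (\<lambda>x. N < x) A = []\<close> by simp
  have "\<tau> = A @ filter (\<lambda>x. x \<le> N) D"
    using split A_small by (simp add: \<tau>_def filter_id_conv)
  moreover have "length A = p" using p(1) by (simp add: A_def)
  ultimately show "take p \<tau> = take p \<sigma>" and small: "drop p \<tau> = filter (\<lambda>x. x \<le> N) D"
    by (simp_all add: A_def)
  have "D = interleave (map (\<lambda>x. N < x) D) (filter (\<lambda>x. x \<le> N) D) (filter (\<lambda>x. N < x) D)"
    by (rule interleave_partition[symmetric]) auto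
  then show "\<sigma> = insert_tooth s t p \<tau> (map (\<lambda>x. N < x) D)"
    using split \<open>take p \<tau> = take p \<sigma>\<close> small tail by (simp add: insert_tooth_def A_def N_def)
qed

lemma avoiders_restrict:
  fixes s t m p :: nat and \<sigma> :: "nat list"
  defines "N \<equiv> (s - 1) * t"
  assumes s: "2 \<le> s" and t: "2 \<le> t" and \<sigma>: "\<sigma> \<in> avoiders s t m"
    and p: "p < length \<sigma>" "\<sigma> ! p = N + 1"
  shows "filter (\<lambda>x. x \<le> N) \<sigma> \<in> avoiders (s - 1) t p"
proof -
  define \<tau> where "\<tau> = filter (\<lambda>x. x \<le> N) \<sigma>"
  define D where "D = drop (Suc p) \<sigma>"
  have t1: "1 \<le> t" using t by simp
  have lin: "\<sigma> \<in> lin_ext_combB s t" and av: "avoids_321 \<sigma>" using \<sigma> by (simp_all add: avoiders_def)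
  have dist: "distinct \<sigma>" using avoiders_lin_ext[OF t1 \<sigma>] by simp
  have split: "\<sigma> = take p \<sigma> @ (N + 1) # D" using id_take_nth_drop[OF p(1)] p(2) by (simp add: D_def)
  note cut = lin_ext_eq_insert_tooth[OF s t lin p[unfolded N_def], folded N_def \<tau>_def D_def]
  have "\<tau> \<in> lin_ext_combB (s - 1) t" using lin_ext_restrict[OF t1 lin] by (simp add: \<tau>_def N_def)
  moreover have "avoids_321 \<tau>" using avoids_321_filter[OF dist av] by (simp add: \<tau>_def)
  moreover have "(s - 2) * t + 1 \<in> set (take p \<tau>)"
  proof -
    define q where "q = (s - 2) * t + 1"
    have "s - 1 = Suc (s - 2)" using s by simp
    then have "q \<le> N" using t1 by (simp add: q_def N_def)
    then have "precedes \<sigma> q (N + 1)"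
      using lin_ext_precedes_last_root[OF t1 lin] by (simp add: q_def N_def)
    then have "q \<in> set (take p \<sigma>)"
      using split dist \<open>q \<le> N\<close> precedes_append[of "take p \<sigma>" "(N + 1) # D" q "N + 1"]
      by (metis distinct_append distinct.simps(2) precedes.simps(2) precedes_in_set Suc_eq_plus1
          not_less_eq_eq)
    then show ?thesis using cut(2) by (simp add: q_def \<tau>_def)
  qed
  moreover have "sorted (drop p \<tau>)"
  proof -
    have "sorted_wrt (<) (filter (\<lambda>y. y < N + 1) D)"
      using split avoids_321_sorted_after dist av by metis
    then show ?thesis using cut(3) strict_sorted_imp_sorted by (simp add: \<tau>_def less_Suc_eq_le)
  qed
  moreover have "s - 1 - 1 = s - 2" by simp
  ultimately show ?thesis by (simp add: avoiders_def \<tau>_def)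
qed

lemma avoiders_tail_mask:
  fixes s t m p :: nat and \<sigma> :: "nat list"
  defines "N \<equiv> (s - 1) * t"
  assumes s: "2 \<le> s" and t: "2 \<le> t" and \<sigma>: "\<sigma> \<in> avoiders s t m"
    and p: "p < m" "p < length \<sigma>" "\<sigma> ! p = N + 1"
  shows "map (\<lambda>x. N < x) (drop (Suc p) \<sigma>) \<in> tooth_masks s t m p"
proof -
  define D where "D = drop (Suc p) \<sigma>"
  have lin: "\<sigma> \<in> lin_ext_combB s t" using \<sigma> by (simp add: avoiders_def)
  note cut = lin_ext_eq_insert_tooth[OF s t lin p(2,3)[unfolded N_def], folded N_def D_def]
  have "1 \<le> t" using t by simp
  then have "length D = s * t - p - 1" using avoiders_lin_ext(3)[OF _ \<sigma>] by (simp add: D_def)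
  moreover have "ntrue (map (\<lambda>x. N < x) D) = t - 1"
  proof -
    have "ntrue (map (\<lambda>x. N < x) D) = length (filter (\<lambda>x. N < x) D)"
      by (simp add: filter_map comp_def)
    also have "\<dots> = t - 1" using cut(4) length_tooth_tail s by simp
    finally show ?thesis .
  qed
  moreover have "sorted (drop (m - p - 1) (map (\<lambda>x. N < x) D))"
  proof -
    have "drop (m - p - 1) D = drop m \<sigma>" using p(1) by (simp add: D_def)
    then have "sorted (drop (m - p - 1) D)" using \<sigma> by (simp add: avoiders_def)
    then show ?thesis unfolding drop_map sorted_map
      by (rule sorted_wrt_mono_rel[rotated]) (auto simp: le_bool_def)
  qed
  ultimately show ?thesis by (simp add: tooth_masks_def D_def)
qed

lemma avoiders_decompose:
  assumes s: "2 \<le> s" and t: "2 \<le> t" and \<sigma>: "\<sigma> \<in> avoiders s t m"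
  obtains p \<tau> r where "p < m" "\<tau> \<in> avoiders (s - 1) t p" "r \<in> tooth_masks s t m p"
    "\<sigma> = insert_tooth s t p \<tau> r"
proof -
  have lin: "\<sigma> \<in> lin_ext_combB s t" and "(s - 1) * t + 1 \<in> set (take m \<sigma>)"
    using \<sigma> by (simp_all add: avoiders_def)
  then obtain p where "p < length (take m \<sigma>)" "take m \<sigma> ! p = (s - 1) * t + 1"
    by (metis in_set_conv_nth)
  then have p: "p < m" "p < length \<sigma>" "\<sigma> ! p = (s - 1) * t + 1" by simp_all
  have "\<sigma> = insert_tooth s t p (filter (\<lambda>x. x \<le> (s - 1) * t) \<sigma>)
      (map (\<lambda>x. (s - 1) * t < x) (drop (Suc p) \<sigma>))"
    by (rule lin_ext_eq_insert_tooth(1)[OF s t lin p(2,3)])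
  then show ?thesis
    by (rule that[OF p(1) avoiders_restrict[OF s t \<sigma> p(2,3)] avoiders_tail_mask[OF s t \<sigma> p]])
qed

lemma bij_betw_insert_tooth:
  assumes "2 \<le> s" "2 \<le> t"
  shows "bij_betw (\<lambda>(p, \<tau>, r). insert_tooth s t p \<tau> r)
    (SIGMA p:{..<m}. avoiders (s - 1) t p \<times> tooth_masks s t m p) (avoiders s t m)"
    (is "bij_betw ?f ?D _")
proof (rule bij_betwI')
  fix x y assume "x \<in> ?D" "y \<in> ?D"
  moreover obtain p \<tau> r p' \<tau>' r' where xy: "x = (p, \<tau>, r)" "y = (p', \<tau>', r')"
    by (cases x, cases y)
  ultimately have "tooth_insertion s t p \<tau> r" "tooth_insertion s t p' \<tau>' r'"
    using tooth_insertionI[OF assms] by auto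
  then show "(?f x = ?f y) = (x = y)" using insert_tooth_inj xy by auto
next
  fix x assume "x \<in> ?D"
  then obtain p \<tau> r where x: "x = (p, \<tau>, r)" "p < m" "\<tau> \<in> avoiders (s - 1) t p"
    "r \<in> tooth_masks s t m p"
    by auto
  then interpret tooth_insertion s t p \<tau> r using tooth_insertionI[OF assms] by simp
  show "?f x \<in> avoiders s t m" using insert_tooth_in_avoiders x by (simp add: tooth_masks_def)
next
  fix \<sigma> assume "\<sigma> \<in> avoiders s t m"
  then obtain p \<tau> r where "p < m" "\<tau> \<in> avoiders (s - 1) t p" "r \<in> tooth_masks s t m p"
    "\<sigma> = insert_tooth s t p \<tau> r"
    using avoiders_decompose[OF assms] by blast
  then show "\<exists>x\<in>?D. \<sigma> = ?f x" by (intro bexI[of _ "(p, \<tau>, r)"]) auto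
qed

lemma card_avoiders_eq_sum:
  assumes "2 \<le> s" "2 \<le> t"
  shows "card (avoiders s t m) = (\<Sum>p<m. card (avoiders (s - 1) t p) * card (tooth_masks s t m p))"
proof -
  have "card (avoiders s t m) = card (SIGMA p:{..<m}. avoiders (s - 1) t p \<times> tooth_masks s t m p)"
    using bij_betw_same_card[OF bij_betw_insert_tooth[OF assms]] by simp
  also have "\<dots> = (\<Sum>p<m. card (avoiders (s - 1) t p) * card (tooth_masks s t m p))"
    using assms finite_avoiders[of t] finite_tooth_masks by (simp add: card_cartesian_product)
  finally show ?thesis .
qed

lemma card_tooth_masks:
  assumes "p < m" "m \<le> s * t"
  shows "card (tooth_masks s t m p) = (\<Sum>j = (t - 1) - (s * t - m)..t - 1. (m - p - 1) choose j)"
proof -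
  have "s * t - p - 1 = (m - p - 1) + (s * t - m)" using assms by simp
  then have "tooth_masks s t m p =
      {r. length r = (m - p - 1) + (s * t - m) \<and> ntrue r = t - 1 \<and> sorted (drop (m - p - 1) r)}"
    by (simp add: tooth_masks_def)
  then show ?thesis by (simp add: card_bool_lists_sorted_suffix)
qed

text \<open>The spine labels \<open>1, t + 1, \<dots>, (s - 1) t + 1\<close> form a chain ending in the root of the
  last tooth.\<close>

lemma in_avoiders_imp_le:
  assumes "1 \<le> s" "1 \<le> t" "\<sigma> \<in> avoiders s t m"
  shows "s \<le> m"
proof -
  define root where "root = (s - 1) * t + 1"
  have lin: "\<sigma> \<in> lin_ext_combB s t" and root_in: "root \<in> set (take m \<sigma>)"
    using assms(3) by (simp_all add: avoiders_def root_def)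
  have dist: "distinct \<sigma>" using avoiders_lin_ext[OF assms(2,3)] by simp
  have "(\<lambda>j. j * t + 1) ` {..<s} \<subseteq> set (take m \<sigma>)"
  proof
    fix x assume "x \<in> (\<lambda>j. j * t + 1) ` {..<s}"
    then obtain j where j: "j < s" "x = j * t + 1" by blast
    show "x \<in> set (take m \<sigma>)"
    proof (cases "j = s - 1")
      case True
      then show ?thesis using root_in j by (simp add: root_def)
    next
      case False
      then have "Suc j * t \<le> (s - 1) * t" using j by (intro mult_le_mono1) simp
      then have "x \<le> (s - 1) * t" using j assms(2) by simp
      then have "precedes \<sigma> x root"
        using lin_ext_precedes_last_root[OF assms(2) lin] j by (simp add: root_def)
      then show ?thesis using precedes_take[OF dist _ root_in] by blast
    qed
  qed
  moreover have "inj_on (\<lambda>j. j * t + 1) {..<s}" using assms(2) by (intro inj_onI) simp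
  then have "card ((\<lambda>j. j * t + 1) ` {..<s}) = s" by (simp add: card_image)
  ultimately have "s \<le> card (set (take m \<sigma>))" by (metis card_mono finite_set)
  also have "\<dots> \<le> length (take m \<sigma>)" by (rule card_length)
  also have "\<dots> \<le> m" by simp
  finally show ?thesis .
qed

lemma avoiders_one:
  assumes "1 \<le> t" "1 \<le> m"
  shows "avoiders 1 t m = {[1..<t + 1]}"
proof -
  have rel_iff: "comb_rel 1 t x y \<longleftrightarrow> 1 \<le> x \<and> x < y \<and> y \<le> t" for x y
  proof -
    have "(x - 1) div t = 0" "(y - 1) div t = 0" if "x < y" "y \<le> t"
      using that by simp_all
    then show ?thesis by (auto simp: comb_rel_def)
  qed
  have lin_iff: "\<sigma> \<in> lin_ext_combB 1 t \<longleftrightarrow> \<sigma> = [1..<t + 1]" for \<sigma>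
  proof
    assume "\<sigma> \<in> lin_ext_combB 1 t"
    then have "distinct \<sigma>" "set \<sigma> = set [1..<t + 1]"
      and prec: "\<And>x y. 1 \<le> x \<Longrightarrow> x < y \<Longrightarrow> y \<le> t \<Longrightarrow> precedes \<sigma> x y"
      using assms(1) rel_iff lin_ext_combB_iff[of t \<sigma> 1] by auto
    moreover have "sorted_wrt (<) \<sigma>"
      by (rule sorted_wrt_less_if_precedes) (use calculation in auto)
    ultimately show "\<sigma> = [1..<t + 1]"
      by (metis sorted_distinct_set_unique strict_sorted_iff sorted_upt distinct_upt)
  next
    assume \<sigma>: "\<sigma> = [1..<t + 1]"
    have "precedes \<sigma> x y" if "comb_rel 1 t x y" for x y
      unfolding \<sigma> by (rule precedes_if_sorted_wrt_less[OF sorted_wrt_upt])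
        (use that rel_iff in \<open>auto simp del: upt_Suc\<close>)
    moreover have "distinct \<sigma>" "set \<sigma> = {1..1 * t}" using \<sigma> by auto
    ultimately show "\<sigma> \<in> lin_ext_combB 1 t" using assms(1) lin_ext_combB_iff by blast
  qed
  have "avoids_321 [1..<t + 1]"
    using avoids_321_iff_precedes[OF distinct_upt] precedes_sorted_wrt[OF sorted_wrt_upt]
    by (metis less_asym)
  moreover have "1 \<in> set (take m [1..<t + 1])"
  proof -
    have "[1..<t + 1] = 1 # [Suc 1..<t + 1]" by (rule upt_conv_Cons) (use assms in simp)
    then show ?thesis using assms(2) by (cases m) simp_all
  qed
  moreover have "sorted (drop m [1..<t + 1])" by (rule sorted_wrt_drop, rule sorted_upt)
  ultimately show ?thesis unfolding avoiders_def lin_iff by auto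
qed

lemma sum_binomial_below_eq_0: "n < L \<Longrightarrow> (\<Sum>j = L..u. n choose j) = 0"
  by (intro sum.neutral) auto

lemma card_avoiders_eq_binomial_sum:
  assumes s: "2 \<le> s" and t: "2 \<le> t" and m: "m \<le> s * t"
  shows "card (avoiders s t m) =
    (\<Sum>k = s..m. card (avoiders (s - 1) t (k - 1)) *
      (\<Sum>j = (t - 1) - (s * t - m)..t - 1. (m - k) choose j))"
proof -
  define g where
    "g k = card (avoiders (s - 1) t (k - 1)) * (\<Sum>j = (t - 1) - (s * t - m)..t - 1. (m - k) choose j)"
    for k
  have "card (avoiders s t m) = (\<Sum>p<m. g (Suc p))"
    unfolding card_avoiders_eq_sum[OF s t]
    by (rule sum.cong) (simp_all add: g_def card_tooth_masks m)
  also have "\<dots> = sum g {Suc 0..m}" by (rule sum.atLeast1_atMost_eq[symmetric])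
  also have "\<dots> = sum g {s..m}"
  proof (rule sum.mono_neutral_right)
    show "\<forall>k\<in>{Suc 0..m} - {s..m}. g k = 0"
    proof
      fix k assume "k \<in> {Suc 0..m} - {s..m}"
      then have "k - 1 < s - 1" by auto
      then have "avoiders (s - 1) t (k - 1) = {}"
        using in_avoiders_imp_le[of "s - 1" t] s t by fastforce
      then show "g k = 0" by (simp add: g_def)
    qed
  qed (use s in auto)
  finally show ?thesis by (simp add: g_def)
qed

lemma F_Suc:
  assumes "2 \<le> s" "Suc s \<le> k" "k \<le> s * t + 1"
  shows "F (Suc s) t k =
    (\<Sum>i = s..k - 1. F s t i * (\<Sum>j = (t - 1) - (s * t - (k - 1))..t - 1. (k - 1 - i) choose j))"
proof -
  obtain n where n: "s = Suc (Suc n)" using assms(1) by (metis add_2_eq_Suc le_Suc_ex)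
  define M where "M = Suc n * t"
  have st: "s * t = M + t" by (simp add: n M_def)
  have "1 \<le> k" "k \<le> M + t + 1" using assms st by simp_all
  then have "nat (max 0 (int k - int M - 2)) = (t - 1) - (M + t - (k - 1))" by arith
  then show ?thesis using assms by (simp add: n Let_def M_def add.commute)
qed

lemma card_avoiders_eq_F:
  assumes "2 \<le> s" "2 \<le> t" "s \<le> k" "k \<le> (s - 1) * t + 1"
  shows "card (avoiders (s - 1) t (k - 1)) = F s t k"
  using assms(1,3,4)
proof (induction s arbitrary: k rule: nat_induct_at_least)
  case base
  then have "avoiders 1 t (k - 1) = {[1..<t + 1]}" using avoiders_one assms(2) by simp
  then show ?case using base by (simp add: numeral_2_eq_2)
next
  case (Suc s)
  define inner where
    "inner i = (\<Sum>j = (t - 1) - (s * t - (k - 1))..t - 1. (k - 1 - i) choose j)" for i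
  have "card (avoiders s t (k - 1)) = (\<Sum>i = s..k - 1. card (avoiders (s - 1) t (i - 1)) * inner i)"
    using card_avoiders_eq_binomial_sum[OF Suc.hyps(1) assms(2)] Suc.prems by (simp add: inner_def)
  also have "\<dots> = (\<Sum>i = s..k - 1. F s t i * inner i)"
  proof (rule sum.cong)
    fix i assume i: "i \<in> {s..k - 1}"
    show "card (avoiders (s - 1) t (i - 1)) * inner i = F s t i * inner i"
    proof (cases "i \<le> (s - 1) * t + 1")
      case True
      then show ?thesis using Suc.IH i by simp
    next
      case False
      then have "inner i = 0" unfolding inner_def using Suc.prems i
        by (intro sum_binomial_below_eq_0) (cases s; auto)
      then show ?thesis by simp
    qed
  qed simp
  also have "\<dots> = F (Suc s) t k" using F_Suc[OF Suc.hyps(1)] Suc.prems by (simp add: inner_def)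
  finally show ?case by simp
qed

lemma avoiders_all:
  assumes "1 \<le> s" "1 \<le> t"
  shows "avoiders s t (s * t) = {\<sigma> \<in> lin_ext_combB s t. avoids_321 \<sigma>}"
proof -
  have "(s - 1) * t + 1 \<le> s * t" using assms by (cases s) auto
  then show ?thesis
    using assms(2) by (auto simp: avoiders_def lin_ext_combB_iff distinct_card[symmetric])
qed

theorem theorem5:
  fixes s t :: nat
  assumes "s \<ge> 2" and "t \<ge> 2"
  shows "A321_combB s t = (\<Sum>k = s..(s - 1) * t + 1. ((s * t - k) choose (t - 1)) * F s t k)"
proof -
  have s: "2 \<le> s" and t: "2 \<le> t" using assms by auto
  have "A321_combB s t = card (avoiders s t (s * t))"
    using avoiders_all s t by (simp add: A321_combB_def)
  also have "\<dots> = (\<Sum>k = s..s * t. card (avoiders (s - 1) t (k - 1)) * ((s * t - k) choose (t - 1)))"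
    by (simp add: card_avoiders_eq_binomial_sum[OF s t])
  also have "\<dots> =
      (\<Sum>k = s..(s - 1) * t + 1. card (avoiders (s - 1) t (k - 1)) * ((s * t - k) choose (t - 1)))"
  proof (rule sum.mono_neutral_right)
    have "s * t = (s - 1) * t + t" using s by (cases s) auto
    then show "{s..(s - 1) * t + 1} \<subseteq> {s..s * t}" "\<forall>k\<in>{s..s * t} - {s..(s - 1) * t + 1}.
        card (avoiders (s - 1) t (k - 1)) * ((s * t - k) choose (t - 1)) = 0"
      using t by auto
  qed simp
  also have "\<dots> = (\<Sum>k = s..(s - 1) * t + 1. ((s * t - k) choose (t - 1)) * F s t k)"
    using card_avoiders_eq_F[OF s t] by (intro sum.cong) simp_all
  finally show ?thesis .
qed

end
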